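(* For every integer $n\ge3$, $\frac n3\le \mathrm{opt}(C_n)\le \frac{n+1}{3}$, and if $n\equiv 0\pmod 3$ then $\mathrm{opt}(C_n)=\frac n3$.
   Context: $C_n$ is the cycle on $n$ vertices. Multiparty equality in the local broadcast model: every vertex $v$ of a connected graph $G$ receives an input $\lambda(v)\in\{0,1\}^k$. Vertices communicate by broadcasting messages, received by all neighbours and counted once. Protocols are deterministic and static: which vertices send and message lengths depend only on $G$ and $k$, contents may depend on inputs. At the end every vertex accepts or rejects; the protocol solves the problem if all vertices accept when all inputs are equal and at least one rejects when two inputs differ. Total cost = sum of the numbers of bits broadcast; $\mathrm{opt}(G,k)$ is the minimum total cost of a solving protocol and $\mathrm{opt}(G)=\lim_{k\to\infty}\mathrm{opt}(G,k)/k$. *)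

theory Defs
  imports Complex_Main
begin

text \<open>A graph is given by a vertex set V and a
symmetric irreflexive adjacency relation E. A static deterministic protocol
is a fixed schedule of broadcasts (v, l, f): vertex v broadcasts an l-bit
message (encoded as a natural number below 2^l) whose content is computed by f
from v's input and v's view of the earlier broadcasts.\<close>

type_synonym 'a bstep = "'a \<times> nat \<times> (bool list \<Rightarrow> nat list \<Rightarrow> nat)"
type_synonym 'a protocol = "'a bstep list \<times> ('a \<Rightarrow> bool list \<Rightarrow> nat list \<Rightarrow> bool)"

definition sees :: "('a \<Rightarrow> 'a \<Rightarrow> bool) \<Rightarrow> 'a \<Rightarrow> 'a \<Rightarrow> bool" where
  "sees E u w \<longleftrightarrow> u = w \<or> E w u"

text \<open>View of u of a transcript: messages it did not receive are masked by 0
(the schedule is static, so positions carry no information about inputs).\<close>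
definition view :: "('a \<Rightarrow> 'a \<Rightarrow> bool) \<Rightarrow> 'a \<Rightarrow> ('a \<times> nat) list \<Rightarrow> nat list" where
  "view E u h = map (\<lambda>(w, m). if sees E u w then m else 0) h"

primrec exec :: "('a \<Rightarrow> 'a \<Rightarrow> bool) \<Rightarrow> 'a bstep list \<Rightarrow> ('a \<Rightarrow> bool list)
    \<Rightarrow> ('a \<times> nat) list \<Rightarrow> ('a \<times> nat) list" where
  "exec E [] lam h = h"
| "exec E (st # sts) lam h =
     (case st of (v, l, f) \<Rightarrow> exec E sts lam (h @ [(v, f (lam v) (view E v h) mod 2 ^ l)]))"

definition transcript :: "('a \<Rightarrow> 'a \<Rightarrow> bool) \<Rightarrow> 'a protocol \<Rightarrow> ('a \<Rightarrow> bool list) \<Rightarrow> ('a \<times> nat) list" where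
  "transcript E P lam = exec E (fst P) lam []"

definition accepts :: "('a \<Rightarrow> 'a \<Rightarrow> bool) \<Rightarrow> 'a protocol \<Rightarrow> ('a \<Rightarrow> bool list) \<Rightarrow> 'a \<Rightarrow> bool" where
  "accepts E P lam u = snd P u (lam u) (view E u (transcript E P lam))"

definition cost :: "'a protocol \<Rightarrow> nat" where
  "cost P = sum_list (map (\<lambda>(v, l, f). l) (fst P))"

definition solves_eq :: "'a set \<Rightarrow> ('a \<Rightarrow> 'a \<Rightarrow> bool) \<Rightarrow> nat \<Rightarrow> 'a protocol \<Rightarrow> bool" where
  "solves_eq V E k P \<longleftrightarrow>
     (\<forall>(v, l, f) \<in> set (fst P). v \<in> V) \<and>
     (\<forall>lam. (\<forall>v\<in>V. length (lam v) = k) \<longrightarrow>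
        ((\<forall>v\<in>V. \<forall>w\<in>V. lam v = lam w) \<longrightarrow> (\<forall>u\<in>V. accepts E P lam u)) \<and>
        ((\<exists>v\<in>V. \<exists>w\<in>V. lam v \<noteq> lam w) \<longrightarrow> (\<exists>u\<in>V. \<not> accepts E P lam u)))"

definition opt_k :: "'a set \<Rightarrow> ('a \<Rightarrow> 'a \<Rightarrow> bool) \<Rightarrow> nat \<Rightarrow> nat" where
  "opt_k V E k = (LEAST c. \<exists>P. solves_eq V E k P \<and> cost P = c)"

text \<open>opt(G) = lim_{k\<to>\<infinity>} opt(G,k)/k.\<close>
definition opt_rate :: "'a set \<Rightarrow> ('a \<Rightarrow> 'a \<Rightarrow> bool) \<Rightarrow> nat \<Rightarrow> real" where
  "opt_rate V E k = real (opt_k V E k) / real k"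

definition cycle_adj :: "nat \<Rightarrow> nat \<Rightarrow> nat \<Rightarrow> bool" where
  "cycle_adj n i j \<longleftrightarrow> Suc i mod n = j \<or> Suc j mod n = i"

end

theory Submission
  imports Defs "HOL-Library.FuncSet"
begin

(*
  Suppose the constant inputs x and y produce the same messages at every
  position spoken by a vertex near v (v itself or a vertex that hears or is heard by v).
  Giving v the input y and everyone else x then reproduces the transcript of the x-run,
  which v cannot tell apart from the y-run, so everybody accepts and x = y. Hence the
  messages spoken near v carry at least k bits; every broadcast of C_n is near at most
  three vertices, so n k <= 3 cost.

  Cut the input into D triples (a, b, c) of m-bit numbers. Vertex j broadcasts
  c - (j + p) b + j p a for each triple, p being its predecessor, and the sum of the squares
  of its a's; every vertex checks what it hears against its own input. On the edge from j
  to its successor the two checks leave, for each triple, only differences that are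
  multiples of (1, j, j^2). Summing the b-increments around the cycle shows that the
  a-vector of vertex 0 is the mean of all a-vectors; as they all have the same norm, they
  coincide, and then so do all inputs. Messages are residues modulo 2^l, with l = m + 2n
  for the triples and l = 2m + D for the sum of squares; the values of two inputs differ by
  less than 2^l, so comparing residues is exact. The cost n (D (m + 2n + 1) + 2m) with
  3 D m ~ k shows opt(C_n, k) / k -> n / 3 as m grows: opt(C_n) = n / 3 for every n >= 3.
*)

definition broadcast :: "('a \<Rightarrow> 'a \<Rightarrow> bool) \<Rightarrow> 'a bstep \<Rightarrow> ('a \<Rightarrow> bool list) \<Rightarrow>
    ('a \<times> nat) list \<Rightarrow> 'a \<times> nat" where
  "broadcast E st lam h = (case st of (v, l, f) \<Rightarrow> (v, f (lam v) (view E v h) mod 2 ^ l))"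

lemma exec_Cons_broadcast [simp]:
  "exec E (st # sts) lam h = exec E sts lam (h @ [broadcast E st lam h])"
  by (cases st) (simp add: broadcast_def)

declare exec.simps(2) [simp del]

lemma exec_snoc:
  "exec E (sts @ [st]) lam h = exec E sts lam h @ [broadcast E st lam (exec E sts lam h)]"
  by (induction sts arbitrary: h) simp_all

lemma length_exec: "length (exec E sts lam h) = length h + length sts"
  by (induction sts arbitrary: h) simp_all

lemma take_exec: "take (length h + i) (exec E sts lam h) = exec E (take i sts) lam h"
proof (induction sts arbitrary: h i)
  case (Cons st sts)
  show ?case
  proof (cases i)
    case 0
    have "take (length h) (take (Suc (length h)) (exec E sts lam (h @ [broadcast E st lam h])))
        = take (length h) (h @ [broadcast E st lam h])"
      using Cons.IH[of "h @ [broadcast E st lam h]" 0] by simp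
    with 0 show ?thesis by (simp add: min_def)
  next
    case (Suc j)
    then show ?thesis using Cons.IH[of "h @ [broadcast E st lam h]" j] by simp
  qed
qed simp

lemma length_transcript: "length (transcript E P lam) = length (fst P)"
  by (simp add: transcript_def length_exec)

lemma take_transcript: "take i (transcript E P lam) = exec E (take i (fst P)) lam []"
  using take_exec[of "[]" i E "fst P" lam] by (simp add: transcript_def)

lemma transcript_nth:
  assumes "i < length (fst P)"
  shows "transcript E P lam ! i = broadcast E (fst P ! i) lam (take i (transcript E P lam))"
proof -
  have "take (Suc i) (fst P) = take i (fst P) @ [fst P ! i]"
    using assms by (simp add: take_Suc_conv_app_nth)
  then have "take (Suc i) (transcript E P lam)
      = take i (transcript E P lam) @ [broadcast E (fst P ! i) lam (take i (transcript E P lam))]"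
    by (simp only: take_transcript exec_snoc)
  then have "take (Suc i) (transcript E P lam) ! i
      = broadcast E (fst P ! i) lam (take i (transcript E P lam))"
    using assms by (simp add: nth_append length_transcript)
  then show ?thesis
    by simp
qed

lemma fst_transcript_nth:
  "i < length (fst P) \<Longrightarrow> fst (transcript E P lam ! i) = fst (fst P ! i)"
  by (simp add: transcript_nth broadcast_def split: prod.splits)

lemma broadcast_cong:
  assumes "lam (fst st) = lam' (fst st)" and "view E (fst st) h = view E (fst st) h'"
  shows "broadcast E st lam h = broadcast E st lam' h'"
  using assms by (cases st) (simp add: broadcast_def)

lemma snd_transcript_nth_less:
  "i < length (fst P) \<Longrightarrow> snd (transcript E P lam ! i) < 2 ^ fst (snd (fst P ! i))"
  by (simp add: transcript_nth broadcast_def split: prod.splits)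

lemma transcript_eqI:
  assumes len: "length T = length (fst P)"
    and step: "\<And>i. i < length T \<Longrightarrow> T ! i = broadcast E (fst P ! i) lam (take i T)"
  shows "transcript E P lam = T"
proof -
  have "take i (transcript E P lam) = take i T" if "i \<le> length T" for i
    using that
  proof (induction i)
    case (Suc i)
    then have "transcript E P lam ! i = T ! i"
      using len step[of i] transcript_nth[of i P E lam] by simp
    with Suc show ?case
      using len by (simp add: take_Suc_conv_app_nth length_transcript)
  qed simp
  from this[of "length T"] show ?thesis
    using len by (simp add: length_transcript)
qed

lemma view_eqI:
  assumes "length T1 = length T2"
    and "\<And>j. j < length T1 \<Longrightarrow> fst (T1 ! j) = fst (T2 ! j)"
    and "\<And>j. j < length T1 \<Longrightarrow> sees E u (fst (T1 ! j)) \<Longrightarrow> snd (T1 ! j) = snd (T2 ! j)"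
  shows "view E u T1 = view E u T2"
  using assms by (auto simp: view_def split_beta intro: nth_equalityI)

definition near :: "('a \<Rightarrow> 'a \<Rightarrow> bool) \<Rightarrow> 'a \<Rightarrow> 'a \<Rightarrow> bool" where
  "near E v w \<longleftrightarrow> sees E v w \<or> sees E w v"

lemma view_take_eq_if_transcripts_agree_near:
  assumes agree: "\<And>i. i < length (fst P) \<Longrightarrow> near E v (fst (fst P ! i)) \<Longrightarrow>
      transcript E P lam ! i = transcript E P lam' ! i"
  shows "view E v (take i (transcript E P lam)) = view E v (take i (transcript E P lam'))"
  using agree by (intro view_eqI) (auto simp: length_transcript fst_transcript_nth near_def)

lemma transcript_fun_upd_eq_if_transcripts_agree_near:
  assumes agree: "\<And>i. i < length (fst P) \<Longrightarrow> near E v (fst (fst P ! i)) \<Longrightarrow>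
      transcript E P lam ! i = transcript E P lam' ! i"
  shows "transcript E P (lam(v := lam' v)) = transcript E P lam"
proof (rule transcript_eqI)
  define T where "T = transcript E P lam"
  fix i assume "i < length T"
  then have i: "i < length (fst P)"
    by (simp add: T_def length_transcript)
  show "T ! i = broadcast E (fst P ! i) (lam(v := lam' v)) (take i T)"
  proof (cases "fst (fst P ! i) = v")
    case True
    then have "T ! i = transcript E P lam' ! i"
      using i agree[of i] by (simp add: T_def near_def sees_def)
    also have "\<dots> = broadcast E (fst P ! i) lam' (take i (transcript E P lam'))"
      using i by (rule transcript_nth)
    also have "\<dots> = broadcast E (fst P ! i) (lam(v := lam' v)) (take i T)"
      using True view_take_eq_if_transcripts_agree_near[OF agree, where i = i]
      by (intro broadcast_cong) (simp_all add: T_def)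
    finally show ?thesis .
  next
    case False
    have "T ! i = broadcast E (fst P ! i) lam (take i T)"
      using i by (simp add: T_def transcript_nth)
    also have "\<dots> = broadcast E (fst P ! i) (lam(v := lam' v)) (take i T)"
      using False by (intro broadcast_cong) simp_all
    finally show ?thesis .
  qed
qed (simp add: length_transcript)

lemma solves_eq_eq_if_transcripts_agree_near:
  assumes sol: "solves_eq V E k P" and "v \<in> V" "w \<in> V" "w \<noteq> v"
    and "length x = k" "length y = k"
    and agree: "\<And>i. i < length (fst P) \<Longrightarrow> near E v (fst (fst P ! i)) \<Longrightarrow>
        transcript E P (\<lambda>_. x) ! i = transcript E P (\<lambda>_. y) ! i"
  shows "x = y"
proof (rule ccontr)
  assume "x \<noteq> y"
  define lam where "lam = (\<lambda>_. x)(v := y)"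
  have transcript_lam: "transcript E P lam = transcript E P (\<lambda>_. x)"
    unfolding lam_def using transcript_fun_upd_eq_if_transcripts_agree_near[OF agree] by simp
  have "accepts E P lam u" if "u \<in> V" for u
  proof (cases "u = v")
    case True
    have "view E v (transcript E P (\<lambda>_. x)) = view E v (transcript E P (\<lambda>_. y))"
      using view_take_eq_if_transcripts_agree_near[OF agree, where i = "length (fst P)"]
      by (simp add: length_transcript)
    moreover have "accepts E P (\<lambda>_. y) v"
      using sol \<open>u \<in> V\<close> True \<open>length y = k\<close> by (auto simp: solves_eq_def)
    ultimately show ?thesis
      using True by (simp add: accepts_def transcript_lam) (simp add: lam_def)
  next
    case False
    have "accepts E P (\<lambda>_. x) u"
      using sol \<open>u \<in> V\<close> \<open>length x = k\<close> by (auto simp: solves_eq_def)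
    with False show ?thesis
      by (simp add: accepts_def transcript_lam) (simp add: lam_def)
  qed
  moreover have "lam v \<noteq> lam w" "\<forall>u\<in>V. length (lam u) = k"
    using \<open>x \<noteq> y\<close> \<open>w \<noteq> v\<close> \<open>length x = k\<close> \<open>length y = k\<close> by (simp_all add: lam_def)
  ultimately show False
    using sol \<open>v \<in> V\<close> \<open>w \<in> V\<close> unfolding solves_eq_def by blast
qed

lemma solves_eq_le_bits_near:
  assumes sol: "solves_eq V E k P" and "v \<in> V" "w \<in> V" "w \<noteq> v"
  shows "k \<le> (\<Sum>i | i < length (fst P) \<and> near E v (fst (fst P ! i)). fst (snd (fst P ! i)))"
proof -
  define I where "I = {i. i < length (fst P) \<and> near E v (fst (fst P ! i))}"
  define X where "X = {x :: bool list. length x = k}"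
  define msgs where "msgs x = restrict (\<lambda>i. snd (transcript E P (\<lambda>_. x) ! i)) I" for x
  have "finite I"
    by (simp add: I_def)
  have "inj_on msgs X"
  proof (rule inj_onI)
    fix x y assume "x \<in> X" "y \<in> X" "msgs x = msgs y"
    show "x = y"
    proof (rule solves_eq_eq_if_transcripts_agree_near[OF assms])
      fix i assume "i < length (fst P)" "near E v (fst (fst P ! i))"
      then have "i \<in> I" by (simp add: I_def)
      then have "snd (transcript E P (\<lambda>_. x) ! i) = snd (transcript E P (\<lambda>_. y) ! i)"
        using fun_cong[OF \<open>msgs x = msgs y\<close>, of i] by (simp add: msgs_def)
      with \<open>i < length (fst P)\<close>
      show "transcript E P (\<lambda>_. x) ! i = transcript E P (\<lambda>_. y) ! i"
        by (simp add: prod_eq_iff fst_transcript_nth)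
    qed (use \<open>x \<in> X\<close> \<open>y \<in> X\<close> X_def in auto)
  qed
  moreover have "msgs ` X \<subseteq> (\<Pi>\<^sub>E i\<in>I. {..<2 ^ fst (snd (fst P ! i))})"
    unfolding msgs_def
    by (intro image_subsetI restrict_PiE Pi_I) (simp add: I_def snd_transcript_nth_less)
  ultimately have "card X \<le> card (\<Pi>\<^sub>E i\<in>I. {..<(2::nat) ^ fst (snd (fst P ! i))})"
    using \<open>finite I\<close> by (simp add: card_image [symmetric] card_mono finite_PiE)
  moreover have "card X = 2 ^ k"
    using card_lists_length_eq[of "UNIV :: bool set" k] by (simp add: X_def)
  ultimately have "(2::nat) ^ k \<le> 2 ^ (\<Sum>i\<in>I. fst (snd (fst P ! i)))"
    by (simp add: card_PiE \<open>finite I\<close> power_sum)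
  then show ?thesis
    by (simp add: I_def)
qed

lemma cost_eq_sum: "cost P = (\<Sum>i<length (fst P). fst (snd (fst P ! i)))"
  by (simp add: cost_def sum_list_sum_nth split_def atLeast0LessThan)

lemma solves_eq_card_mult_le_cost:
  assumes sol: "solves_eq V E k P" and "finite V"
    and nontrivial: "\<And>v. v \<in> V \<Longrightarrow> \<exists>w\<in>V. w \<noteq> v"
    and nbhd: "\<And>s. s \<in> V \<Longrightarrow> card {v\<in>V. near E v s} \<le> r"
  shows "card V * k \<le> r * cost P"
proof -
  define N where "N = length (fst P)"
  define s where "s i = fst (fst P ! i)" for i
  define l where "l i = fst (snd (fst P ! i))" for i
  have "s i \<in> V" if "i < N" for i
    using sol nth_mem[OF that[unfolded N_def]] by (force simp: solves_eq_def s_def)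
  have "card V * k = (\<Sum>v\<in>V. k)"
    by simp
  also have "\<dots> \<le> (\<Sum>v\<in>V. \<Sum>i | i < N \<and> near E v (s i). l i)"
    using solves_eq_le_bits_near[OF sol] nontrivial
    by (intro sum_mono) (fastforce simp: N_def s_def l_def)
  also have "\<dots> = (\<Sum>i<N. \<Sum>v\<in>V. if near E v (s i) then l i else 0)"
    by (simp add: sum.inter_filter [symmetric] Collect_conj_eq lessThan_def [symmetric]
        sum.swap [of _ V])
  also have "\<dots> = (\<Sum>i<N. card {v\<in>V. near E v (s i)} * l i)"
    using \<open>finite V\<close> by (simp add: sum.inter_filter [symmetric])
  also have "\<dots> \<le> (\<Sum>i<N. r * l i)"
    using nbhd \<open>\<And>i. i < N \<Longrightarrow> s i \<in> V\<close> by (intro sum_mono mult_right_mono) auto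
  also have "\<dots> = r * cost P"
    by (simp add: cost_eq_sum N_def l_def sum_distrib_left)
  finally show ?thesis .
qed

lemma opt_k_le_cost: "solves_eq V E k P \<Longrightarrow> opt_k V E k \<le> cost P"
  unfolding opt_k_def by (rule Least_le) blast

lemma opt_k_attained:
  "solves_eq V E k P \<Longrightarrow> \<exists>Q. solves_eq V E k Q \<and> cost Q = opt_k V E k"
  unfolding opt_k_def by (rule LeastI_ex) blast

definition cyc_succ :: "nat \<Rightarrow> nat \<Rightarrow> nat" where
  "cyc_succ n j = (if Suc j = n then 0 else Suc j)"

definition cyc_pred :: "nat \<Rightarrow> nat \<Rightarrow> nat" where
  "cyc_pred n j = (if j = 0 then n - 1 else j - 1)"

lemma cyc_succ_less: "j < n \<Longrightarrow> cyc_succ n j < n"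
  by (simp add: cyc_succ_def)

lemma cyc_pred_less: "j < n \<Longrightarrow> cyc_pred n j < n"
  by (auto simp: cyc_pred_def)

lemma cyc_pred_succ: "j < n \<Longrightarrow> cyc_pred n (cyc_succ n j) = j"
  by (auto simp: cyc_succ_def cyc_pred_def)

lemma cyc_pred_ne_succ: "3 \<le> n \<Longrightarrow> j < n \<Longrightarrow> cyc_pred n j \<noteq> cyc_succ n j"
  by (auto simp: cyc_pred_def cyc_succ_def)

lemma cyc_succ_pred: "j < n \<Longrightarrow> cyc_succ n (cyc_pred n j) = j"
  by (auto simp: cyc_succ_def cyc_pred_def)

lemma Suc_mod_eq_cyc_succ: "j < n \<Longrightarrow> Suc j mod n = cyc_succ n j"
  by (simp add: cyc_succ_def)

lemma cycle_adj_iff: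
  "i < n \<Longrightarrow> j < n \<Longrightarrow> cycle_adj n i j \<longleftrightarrow> j = cyc_succ n i \<or> i = cyc_succ n j"
  by (auto simp: cycle_adj_def Suc_mod_eq_cyc_succ)

lemma sees_cyc_succ:
  assumes "j < n"
  shows "sees (cycle_adj n) (cyc_succ n j) j" and "sees (cycle_adj n) j (cyc_succ n j)"
  using assms by (simp_all add: sees_def cycle_adj_iff cyc_succ_less)

lemma card_near_cycle_le:
  assumes "s < n"
  shows "card {v\<in>{..<n}. near (cycle_adj n) v s} \<le> 3"
proof -
  have "{v\<in>{..<n}. near (cycle_adj n) v s} \<subseteq> {s, cyc_succ n s, cyc_pred n s}"
    using assms by (auto simp: near_def sees_def cycle_adj_iff cyc_pred_succ)
  then have "card {v\<in>{..<n}. near (cycle_adj n) v s} \<le> card {s, cyc_succ n s, cyc_pred n s}"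
    by (intro card_mono) simp_all
  also have "\<dots> \<le> 3"
    by (simp add: card_insert_if)
  finally show ?thesis .
qed

lemma bij_betw_cyc_succ: "bij_betw (cyc_succ n) {..<n} {..<n}"
  by (rule bij_betw_byWitness[where f' = "cyc_pred n"])
    (auto simp: cyc_pred_succ cyc_succ_pred cyc_succ_less cyc_pred_less)

lemma sum_cyc_succ: "(\<Sum>j<n. f (cyc_succ n j)) = (\<Sum>j<n. f j)"
  using sum.reindex_bij_betw[OF bij_betw_cyc_succ] .

lemma cyc_succ_invariant_const:
  assumes "\<And>j. j < n \<Longrightarrow> g (cyc_succ n j) = g j" and "j < n"
  shows "g j = g 0"
  using assms(2)
proof (induction j)
  case (Suc j)
  then show ?case
    using assms(1)[of j] by (simp add: cyc_succ_def split: if_splits)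
qed simp

lemma cycle_card_mult_le_cost:
  assumes "n \<ge> 2" and "solves_eq {..<n} (cycle_adj n) k P"
  shows "n * k \<le> 3 * cost P"
proof -
  have "\<exists>w\<in>{..<n}. w \<noteq> v" for v
    using assms(1) by (cases "v = 0") (auto intro: bexI[of _ 1] bexI[of _ 0])
  from solves_eq_card_mult_le_cost[OF assms(2) _ this card_near_cycle_le] show ?thesis
    by simp
qed

(* On the moment vector (a, b, c) = (1, i, i^2) the form takes the value (i - s) (i - t). *)
definition pair_form :: "int \<Rightarrow> int \<Rightarrow> int \<Rightarrow> int \<Rightarrow> int \<Rightarrow> int" where
  "pair_form s t a b c = c - (s + t) * b + s * t * a"

lemma pair_form_diff:
  "pair_form s t a b c - pair_form s t a' b' c' = pair_form s t (a - a') (b - b') (c - c')"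
  by (simp add: pair_form_def algebra_simps)

lemma pair_form_kernel:
  assumes "t \<noteq> s" and "pair_form r t a b c = 0" and "pair_form s r a b c = 0"
  shows "b = r * a \<and> c = r * r * a"
proof -
  have "(s - t) * (b - r * a) = 0"
    using assms(2,3) by (simp add: pair_form_def algebra_simps)
  then have "b = r * a"
    using assms(1) by simp
  with assms(2) show ?thesis
    by (simp add: pair_form_def algebra_simps)
qed

lemma abs_pair_form_less:
  assumes "\<bar>a\<bar> < M" "\<bar>b\<bar> < M" "\<bar>c\<bar> < M" and "0 \<le> s" "0 \<le> t"
  shows "\<bar>pair_form s t a b c\<bar> < M * (1 + s) * (1 + t)"
proof -
  have "\<bar>pair_form s t a b c\<bar> \<le> \<bar>c\<bar> + \<bar>(s + t) * b\<bar> + \<bar>s * t * a\<bar>"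
    unfolding pair_form_def by linarith
  also have "\<dots> = \<bar>c\<bar> + (s + t) * \<bar>b\<bar> + s * t * \<bar>a\<bar>"
    using assms(4,5) by (simp add: abs_mult)
  also have "\<dots> < M + (s + t) * M + s * t * M"
    using assms by (intro add_less_le_mono add_mono mult_left_mono) auto
  also have "\<dots> = M * (1 + s) * (1 + t)"
    by (simp add: algebra_simps)
  finally show ?thesis .
qed

lemma sum_eq_of_cycle_increments:
  fixes a b :: "nat \<Rightarrow> int"
  assumes "\<And>j. j < n \<Longrightarrow> b (cyc_succ n j) - b j = int j * (a (cyc_succ n j) - a j)"
  shows "(\<Sum>j<n. a j) = int n * a 0"
proof -
  have "0 = (\<Sum>j<n. b (cyc_succ n j) - b j)"
    by (simp add: sum_subtractf sum_cyc_succ)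
  also have "\<dots> = (\<Sum>j<n. int (cyc_pred n (cyc_succ n j)) * a (cyc_succ n j) - int j * a j)"
    by (rule sum.cong) (simp_all add: assms cyc_pred_succ right_diff_distrib)
  also have "\<dots> = (\<Sum>j<n. int (cyc_pred n j) * a j - int j * a j)"
    by (simp only: sum_subtractf sum_cyc_succ [where f = "\<lambda>j. int (cyc_pred n j) * a j"])
  also have "\<dots> = (\<Sum>j<n. (if j = 0 then int n * a j else 0) - a j)"
    by (rule sum.cong) (auto simp: cyc_pred_def of_nat_diff algebra_simps)
  also have "\<dots> = (if n = 0 then 0 else int n * a 0) - (\<Sum>j<n. a j)"
    by (simp add: sum_subtractf sum.delta)
  finally show ?thesis
    by (cases "n = 0") simp_all
qed

lemma eq_if_centroid_of_equal_norms:
  fixes a :: "nat \<Rightarrow> nat \<Rightarrow> 'a :: linordered_idom"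
  assumes centroid: "\<And>d. d < D \<Longrightarrow> (\<Sum>i<n. a i d) = of_nat n * a 0 d"
    and norms: "\<And>i. i < n \<Longrightarrow> (\<Sum>d<D. (a i d)\<^sup>2) = (\<Sum>d<D. (a 0 d)\<^sup>2)"
    and "i < n" "d < D"
  shows "a i d = a 0 d"
proof -
  define Q where "Q = (\<Sum>d<D. (a 0 d)\<^sup>2)"
  have "(\<Sum>i<n. \<Sum>d<D. (a i d - a 0 d)\<^sup>2)
      = (\<Sum>i<n. \<Sum>d<D. (a i d)\<^sup>2) - 2 * (\<Sum>d<D. a 0 d * (\<Sum>i<n. a i d)) + of_nat n * Q"
    by (simp add: power2_diff sum_subtractf sum.distrib sum_distrib_left sum_distrib_right
        sum.swap [of _ "{..<n}"] Q_def algebra_simps)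
  also have "\<dots> = 0"
  proof -
    have "(\<Sum>i<n. \<Sum>d<D. (a i d)\<^sup>2) = (\<Sum>i<n. Q)"
      using norms [folded Q_def] by (intro sum.cong) auto
    moreover have "(\<Sum>d<D. a 0 d * (\<Sum>i<n. a i d)) = of_nat n * Q"
      using centroid by (simp add: Q_def sum_distrib_left power2_eq_square algebra_simps)
    ultimately show ?thesis
      by simp
  qed
  finally have "(\<Sum>i<n. \<Sum>d<D. (a i d - a 0 d)\<^sup>2) = 0" .
  then have "(\<Sum>d<D. (a i d - a 0 d)\<^sup>2) = 0"
    using \<open>i < n\<close> by (subst (asm) sum_nonneg_eq_0_iff) (auto intro: sum_nonneg)
  then show ?thesis
    using \<open>d < D\<close> by (simp add: sum_nonneg_eq_0_iff)
qed

definition vertex_form :: "nat \<Rightarrow> nat \<Rightarrow> int \<Rightarrow> int \<Rightarrow> int \<Rightarrow> int" where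
  "vertex_form n j = pair_form (int j) (int (cyc_pred n j))"

lemma cycle_increments_on_moment_curve:
  assumes "3 \<le> n" "j < n"
    and "vertex_form n j a b c = vertex_form n j a' b' c'"
    and "vertex_form n (cyc_succ n j) a b c = vertex_form n (cyc_succ n j) a' b' c'"
  shows "b' - b = int j * (a' - a) \<and> c' - c = int j * int j * (a' - a)"
proof (rule pair_form_kernel)
  show "int (cyc_pred n j) \<noteq> int (cyc_succ n j)"
    using cyc_pred_ne_succ[OF assms(1,2)] by simp
  show "pair_form (int j) (int (cyc_pred n j)) (a' - a) (b' - b) (c' - c) = 0"
    using assms(3) pair_form_diff[of "int j" "int (cyc_pred n j)" a' b' c' a b c]
    by (simp add: vertex_form_def)
  show "pair_form (int (cyc_succ n j)) (int j) (a' - a) (b' - b) (c' - c) = 0"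
    using assms(4) pair_form_diff[of "int (cyc_succ n j)" "int j" a' b' c' a b c]
    by (simp add: vertex_form_def cyc_pred_succ \<open>j < n\<close>)
qed

lemma cycle_moment_rigidity:
  fixes a b c :: "nat \<Rightarrow> nat \<Rightarrow> int"
  assumes "3 \<le> n"
    and own: "\<And>j d. j < n \<Longrightarrow> d < D \<Longrightarrow>
      vertex_form n j (a j d) (b j d) (c j d)
      = vertex_form n j (a (cyc_succ n j) d) (b (cyc_succ n j) d) (c (cyc_succ n j) d)"
    and succ: "\<And>j d. j < n \<Longrightarrow> d < D \<Longrightarrow>
      vertex_form n (cyc_succ n j) (a j d) (b j d) (c j d)
      = vertex_form n (cyc_succ n j) (a (cyc_succ n j) d) (b (cyc_succ n j) d) (c (cyc_succ n j) d)"
    and norms: "\<And>j. j < n \<Longrightarrow> (\<Sum>d<D. (a (cyc_succ n j) d)\<^sup>2) = (\<Sum>d<D. (a j d)\<^sup>2)"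
    and "j < n" "d < D"
  shows "a (cyc_succ n j) d = a j d \<and> b (cyc_succ n j) d = b j d \<and> c (cyc_succ n j) d = c j d"
proof -
  have increments: "b (cyc_succ n i) e - b i e = int i * (a (cyc_succ n i) e - a i e)
      \<and> c (cyc_succ n i) e - c i e = int i * int i * (a (cyc_succ n i) e - a i e)"
    if "i < n" "e < D" for i e
    using cycle_increments_on_moment_curve[OF \<open>3 \<le> n\<close> that(1) own[OF that] succ[OF that]] .
  have centroid: "(\<Sum>i<n. a i e) = of_nat n * a 0 e" if "e < D" for e
    using increments that by (intro sum_eq_of_cycle_increments[where b = "\<lambda>i. b i e"]) simp
  have equal_norms: "(\<Sum>e<D. (a i e)\<^sup>2) = (\<Sum>e<D. (a 0 e)\<^sup>2)" if "i < n" for i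
    using norms that by (rule cyc_succ_invariant_const)
  have a_const: "a i d = a 0 d" if "i < n" for i
    by (rule eq_if_centroid_of_equal_norms[where a = a and D = D and n = n,
          OF centroid equal_norms that \<open>d < D\<close>])
  have "a (cyc_succ n j) d = a j d"
    using a_const[of j] a_const[of "cyc_succ n j"] \<open>j < n\<close> cyc_succ_less by simp
  with increments[OF \<open>j < n\<close> \<open>d < D\<close>] show ?thesis
    by simp
qed

lemma horner_sum_of_bool_2_inj:
  assumes "length bs = length cs" and "horner_sum of_bool 2 bs = (horner_sum of_bool 2 cs :: int)"
  shows "bs = cs"
proof (rule nth_equalityI)
  fix i assume "i < length bs"
  have "bit (horner_sum of_bool 2 bs :: int) i = bit (horner_sum of_bool 2 cs :: int) i"
    using assms(2) by simp
  with \<open>i < length bs\<close> assms(1) show "bs ! i = cs ! i"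
    by (simp add: bit_horner_sum_bit_iff)
qed (fact assms(1))

definition block :: "nat \<Rightarrow> bool list \<Rightarrow> nat \<Rightarrow> bool list" where
  "block m x d = take m (drop (m * d) x)"

definition digit :: "nat \<Rightarrow> bool list \<Rightarrow> nat \<Rightarrow> int" where
  "digit m x d = horner_sum of_bool 2 (block m x d)"

lemma digit_bounds: "0 \<le> digit m x d" "digit m x d < 2 ^ m"
proof -
  show "0 \<le> digit m x d"
    by (simp add: digit_def horner_sum_nonnegative)
  have "digit m x d < 2 ^ length (block m x d)"
    unfolding digit_def by (rule horner_sum_of_bool_2_less)
  also have "\<dots> \<le> 2 ^ m"
    by (simp add: block_def)
  finally show "digit m x d < 2 ^ m" .
qed

lemma eq_if_digits_eq:
  assumes "length x = length y" "length x \<le> K * m"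
    and digits: "\<And>d. d < K \<Longrightarrow> digit m x d = digit m y d"
  shows "x = y"
proof (rule nth_equalityI)
  fix i assume "i < length x"
  then have "0 < m"
    using assms(2) by (cases m) simp_all
  have "i div m < K"
    using \<open>i < length x\<close> assms(2) by (simp add: less_mult_imp_div_less)
  then have "block m x (i div m) = block m y (i div m)"
    using digits assms(1) by (intro horner_sum_of_bool_2_inj) (simp_all add: digit_def block_def)
  moreover have "z ! i = block m z (i div m) ! (i mod m)" if "length z = length x" for z
  proof -
    have i: "m * (i div m) + i mod m = i"
      by simp
    then have "m * (i div m) \<le> length z"
      using \<open>i < length x\<close> that by linarith
    then show ?thesis
      using \<open>0 < m\<close> by (simp add: block_def nth_drop i)
  qed
  ultimately show "x ! i = y ! i"
    using assms(1) by metis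
qed (fact assms(1))

lemma eq_if_digit_triples_eq:
  assumes "length x = length y" "length x \<le> 3 * D * m"
    and triples: "\<And>d. d < D \<Longrightarrow> digit m x d = digit m y d \<and> digit m x (D + d) = digit m y (D + d)
      \<and> digit m x (2 * D + d) = digit m y (2 * D + d)"
  shows "x = y"
proof (rule eq_if_digits_eq[OF assms(1,2)])
  fix e assume "e < 3 * D"
  define d where "d = e mod D"
  have "d < D" "e = e div D * D + d" "e div D < 3"
    using \<open>e < 3 * D\<close> by (simp_all add: d_def less_mult_imp_div_less)
  then have "e = d \<or> e = D + d \<or> e = 2 * D + d"
    by (auto simp: numeral_3_eq_3 less_Suc_eq)
  with triples[OF \<open>d < D\<close>] show "digit m x e = digit m y e"
    by auto
qed

lemma eq_if_mod_eq_abs_diff_less: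
  fixes z w M :: int
  assumes "z mod M = w mod M" and "\<bar>z - w\<bar> < M"
  shows "z = w"
proof (rule ccontr)
  assume "z \<noteq> w"
  have "M dvd z - w"
    using assms(1) by (simp add: mod_eq_dvd_iff)
  then have "\<bar>M\<bar> \<le> \<bar>z - w\<bar>"
    using \<open>z \<noteq> w\<close> by (simp add: dvd_imp_le_int)
  with assms(2) show False
    by simp
qed

type_synonym 'a echo_step = "'a \<times> nat \<times> (bool list \<Rightarrow> int)"

definition echo_protocol :: "('a \<Rightarrow> 'a \<Rightarrow> bool) \<Rightarrow> 'a echo_step list \<Rightarrow> 'a protocol" where
  "echo_protocol E sch =
     (map (\<lambda>(v, l, g). (v, l, \<lambda>x _. nat (g x mod 2 ^ l))) sch,
      \<lambda>u x vw. \<forall>i<length sch.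
        case sch ! i of (w, l, g) \<Rightarrow> sees E u w \<longrightarrow> vw ! i = nat (g x mod 2 ^ l))"

lemma nat_mod_2_power_mod: "nat (z mod 2 ^ l) mod 2 ^ l = nat (z mod 2 ^ l)"
  by (simp add: nat_mod_distrib nat_power_eq)

lemma transcript_echo_protocol:
  "transcript E (echo_protocol E sch) lam = map (\<lambda>(w, l, g). (w, nat (g (lam w) mod 2 ^ l))) sch"
  by (rule transcript_eqI)
    (simp_all add: echo_protocol_def broadcast_def nat_mod_2_power_mod split: prod.splits)

lemma accepts_echo_protocol:
  "accepts E (echo_protocol E sch) lam u \<longleftrightarrow>
     (\<forall>(w, l, g)\<in>set sch. sees E u w \<longrightarrow> g (lam w) mod 2 ^ l = g (lam u) mod 2 ^ l)"
  unfolding accepts_def transcript_echo_protocol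
  by (auto simp: view_def all_set_conv_all_nth echo_protocol_def eq_nat_nat_iff split: prod.splits)

lemma cost_echo_protocol: "cost (echo_protocol E sch) = (\<Sum>(v, l, g)\<leftarrow>sch. l)"
  by (simp add: cost_def echo_protocol_def comp_def split_def)

lemma solves_eq_echo_protocol:
  assumes speakers: "\<And>v l g. (v, l, g) \<in> set sch \<Longrightarrow> v \<in> V"
    and range: "\<And>v l g x y. (v, l, g) \<in> set sch \<Longrightarrow> \<bar>g x - g y\<bar> < 2 ^ l"
    and sound: "\<And>lam. \<forall>v\<in>V. length (lam v) = k \<Longrightarrow>
      \<forall>u\<in>V. \<forall>(w, l, g)\<in>set sch. sees E u w \<longrightarrow> g (lam w) = g (lam u) \<Longrightarrow>
      \<forall>v\<in>V. \<forall>w\<in>V. lam v = lam w"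
  shows "solves_eq V E k (echo_protocol E sch)"
  unfolding solves_eq_def
proof (intro conjI allI impI)
  show "\<forall>(v, l, f)\<in>set (fst (echo_protocol E sch)). v \<in> V"
    using speakers by (auto simp: echo_protocol_def)
next
  fix lam :: "'a \<Rightarrow> bool list"
  assume equal: "\<forall>v\<in>V. \<forall>w\<in>V. lam v = lam w"
  show "\<forall>u\<in>V. accepts E (echo_protocol E sch) lam u"
  proof
    fix u assume "u \<in> V"
    then have "lam w = lam u" if "(w, l, g) \<in> set sch" for w l g
      using equal speakers[OF that] by blast
    then show "accepts E (echo_protocol E sch) lam u"
      by (auto simp: accepts_echo_protocol)
  qed
next
  fix lam :: "'a \<Rightarrow> bool list"
  assume "\<forall>v\<in>V. length (lam v) = k" "\<exists>v\<in>V. \<exists>w\<in>V. lam v \<noteq> lam w"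
  show "\<exists>u\<in>V. \<not> accepts E (echo_protocol E sch) lam u"
  proof (rule ccontr)
    assume "\<not> (\<exists>u\<in>V. \<not> accepts E (echo_protocol E sch) lam u)"
    then have "g (lam w) mod 2 ^ l = g (lam u) mod 2 ^ l"
      if "u \<in> V" "(w, l, g) \<in> set sch" "sees E u w" for u w l g
      using that by (fastforce simp: accepts_echo_protocol)
    then have "\<forall>u\<in>V. \<forall>(w, l, g)\<in>set sch. sees E u w \<longrightarrow> g (lam w) = g (lam u)"
      using range by (blast intro: eq_if_mod_eq_abs_diff_less)
    with sound \<open>\<forall>v\<in>V. length (lam v) = k\<close> \<open>\<exists>v\<in>V. \<exists>w\<in>V. lam v \<noteq> lam w\<close> show False
      by blast
  qed
qed

definition vertex_msg :: "nat \<Rightarrow> nat \<Rightarrow> nat \<Rightarrow> nat \<Rightarrow> nat \<Rightarrow> bool list \<Rightarrow> int" where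
  "vertex_msg n m D j d x = vertex_form n j (digit m x d) (digit m x (D + d)) (digit m x (2 * D + d))"

definition norm_msg :: "nat \<Rightarrow> nat \<Rightarrow> bool list \<Rightarrow> int" where
  "norm_msg m D x = (\<Sum>d<D. (digit m x d)\<^sup>2)"

definition cycle_schedule :: "nat \<Rightarrow> nat \<Rightarrow> nat \<Rightarrow> nat echo_step list" where
  "cycle_schedule n m D =
     concat (map (\<lambda>j. map (\<lambda>d. (j, m + 2 * n, vertex_msg n m D j d)) [0..<D]
                      @ [(j, 2 * m + D, norm_msg m D)])
       [0..<n])"

lemma sum_list_concat: "sum_list (concat xss) = sum_list (map sum_list xss)"
  by (induction xss) simp_all

lemma cost_cycle_schedule:
  "cost (echo_protocol E (cycle_schedule n m D)) = n * (D * (m + 2 * n) + (2 * m + D))"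
  by (simp add: cost_echo_protocol cycle_schedule_def map_concat sum_list_concat comp_def
      sum_list_triv)

lemma abs_vertex_msg_diff_less:
  assumes "j < n"
  shows "\<bar>vertex_msg n m D j d x - vertex_msg n m D j d y\<bar> < 2 ^ (m + 2 * n)"
proof -
  have digit_diff: "\<bar>digit m x e - digit m y e\<bar> < 2 ^ m" for e
    using digit_bounds[of m x e] digit_bounds[of m y e] by linarith
  have "(1 + int j) * (1 + int (cyc_pred n j)) \<le> int n * int n"
    using assms cyc_pred_less[OF assms] by (intro mult_mono) simp_all
  also have "\<dots> \<le> 4 ^ n"
  proof -
    have "n * n \<le> 2 ^ n * 2 ^ n"
      using less_exp[of n] by (intro mult_mono) simp_all
    also have "\<dots> = 4 ^ n"
      by (simp flip: power_mult_distrib)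
    finally have "int (n * n) \<le> int (4 ^ n)"
      by (rule of_nat_mono)
    then show ?thesis
      by simp
  qed
  finally have "(1 + int j) * (1 + int (cyc_pred n j)) \<le> 4 ^ n" .
  have "\<bar>vertex_msg n m D j d x - vertex_msg n m D j d y\<bar>
      < 2 ^ m * (1 + int j) * (1 + int (cyc_pred n j))"
    unfolding vertex_msg_def vertex_form_def pair_form_diff
    by (rule abs_pair_form_less) (simp_all add: digit_diff)
  also have "\<dots> \<le> 2 ^ m * 4 ^ n"
    using \<open>(1 + int j) * (1 + int (cyc_pred n j)) \<le> 4 ^ n\<close> by (simp add: mult.assoc)
  also have "\<dots> = 2 ^ (m + 2 * n)"
    by (simp add: power_add power_mult)
  finally show ?thesis .
qed

lemma norm_msg_bounds: "0 \<le> norm_msg m D x" "norm_msg m D x < 2 ^ (2 * m + D)"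
proof -
  show "0 \<le> norm_msg m D x"
    by (simp add: norm_msg_def sum_nonneg)
  have "norm_msg m D x \<le> (\<Sum>d<D. 4 ^ m)"
    unfolding norm_msg_def
  proof (rule sum_mono)
    fix d
    have "(digit m x d)\<^sup>2 \<le> (2 ^ m)\<^sup>2"
      using digit_bounds[of m x d] by (intro power_mono) simp_all
    then show "(digit m x d)\<^sup>2 \<le> 4 ^ m"
      by (simp add: power2_eq_square flip: power_mult_distrib)
  qed
  also have "\<dots> = int D * 4 ^ m"
    by simp
  also have "\<dots> < 2 ^ D * 4 ^ m"
  proof -
    have "int D < int (2 ^ D)"
      by (simp only: of_nat_less_iff less_exp)
    then show ?thesis
      by (intro mult_strict_right_mono) simp_all
  qed
  also have "\<dots> = 2 ^ (2 * m + D)"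
    by (simp add: power_add power_mult)
  finally show "norm_msg m D x < 2 ^ (2 * m + D)" .
qed

lemma vertex_msg_in_cycle_schedule:
  "j < n \<Longrightarrow> d < D \<Longrightarrow> (j, m + 2 * n, vertex_msg n m D j d) \<in> set (cycle_schedule n m D)"
  unfolding cycle_schedule_def by (auto intro!: bexI[of _ j])

lemma norm_msg_in_cycle_schedule:
  "j < n \<Longrightarrow> (j, 2 * m + D, norm_msg m D) \<in> set (cycle_schedule n m D)"
  unfolding cycle_schedule_def by (auto intro!: bexI[of _ j])

lemma speaker_in_cycle_schedule: "(v, l, g) \<in> set (cycle_schedule n m D) \<Longrightarrow> v < n"
  unfolding cycle_schedule_def by auto

lemma cycle_succ_input_eq_if_msgs_agree:
  fixes lam :: "nat \<Rightarrow> bool list"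
  assumes "3 \<le> n" and len: "\<And>v. v < n \<Longrightarrow> length (lam v) = k" and "k \<le> 3 * D * m"
    and own: "\<And>j d. j < n \<Longrightarrow> d < D \<Longrightarrow>
      vertex_msg n m D j d (lam j) = vertex_msg n m D j d (lam (cyc_succ n j))"
    and succ: "\<And>j d. j < n \<Longrightarrow> d < D \<Longrightarrow>
      vertex_msg n m D (cyc_succ n j) d (lam j) = vertex_msg n m D (cyc_succ n j) d (lam (cyc_succ n j))"
    and norms: "\<And>j. j < n \<Longrightarrow> norm_msg m D (lam (cyc_succ n j)) = norm_msg m D (lam j)"
    and "j < n"
  shows "lam (cyc_succ n j) = lam j"
proof (rule eq_if_digit_triples_eq)
  show "length (lam (cyc_succ n j)) = length (lam j)" "length (lam (cyc_succ n j)) \<le> 3 * D * m"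
    using len \<open>j < n\<close> \<open>k \<le> 3 * D * m\<close> cyc_succ_less by auto
  fix d assume "d < D"
  show "digit m (lam (cyc_succ n j)) d = digit m (lam j) d
    \<and> digit m (lam (cyc_succ n j)) (D + d) = digit m (lam j) (D + d)
    \<and> digit m (lam (cyc_succ n j)) (2 * D + d) = digit m (lam j) (2 * D + d)"
    using cycle_moment_rigidity[where a = "\<lambda>j d. digit m (lam j) d"
        and b = "\<lambda>j d. digit m (lam j) (D + d)" and c = "\<lambda>j d. digit m (lam j) (2 * D + d)",
        OF \<open>3 \<le> n\<close> own [unfolded vertex_msg_def] succ [unfolded vertex_msg_def]
        norms [unfolded norm_msg_def] \<open>j < n\<close> \<open>d < D\<close>]
    by simp
qed

lemma abs_cycle_schedule_msg_diff_less:
  "(v, l, g) \<in> set (cycle_schedule n m D) \<Longrightarrow> \<bar>g x - g y\<bar> < 2 ^ l"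
  using norm_msg_bounds[of m D x] norm_msg_bounds[of m D y]
  by (auto simp: cycle_schedule_def abs_vertex_msg_diff_less)

lemma solves_eq_cycle_schedule:
  assumes "3 \<le> n" and "k \<le> 3 * D * m"
  shows "solves_eq {..<n} (cycle_adj n) k (echo_protocol (cycle_adj n) (cycle_schedule n m D))"
proof (rule solves_eq_echo_protocol)
  show "v \<in> {..<n}" if "(v, l, g) \<in> set (cycle_schedule n m D)" for v l g
    using that by (simp add: speaker_in_cycle_schedule)
next
  show "\<bar>g x - g y\<bar> < 2 ^ l" if "(v, l, g) \<in> set (cycle_schedule n m D)" for v l g x y
    using that by (rule abs_cycle_schedule_msg_diff_less)
next
  fix lam :: "nat \<Rightarrow> bool list"
  assume len: "\<forall>v\<in>{..<n}. length (lam v) = k"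
    and checks: "\<forall>u\<in>{..<n}. \<forall>(w, l, g)\<in>set (cycle_schedule n m D).
      sees (cycle_adj n) u w \<longrightarrow> g (lam w) = g (lam u)"
  have vertex: "vertex_msg n m D j d (lam j) = vertex_msg n m D j d (lam i)"
    if "j < n" "i < n" "d < D" "sees (cycle_adj n) i j" for i j d
    using checks vertex_msg_in_cycle_schedule[of j n d D m] that by fastforce
  have norm: "norm_msg m D (lam j) = norm_msg m D (lam i)"
    if "j < n" "i < n" "sees (cycle_adj n) i j" for i j
    using checks norm_msg_in_cycle_schedule[of j n m D] that by fastforce
  have "lam (cyc_succ n j) = lam j" if "j < n" for j
  proof (rule cycle_succ_input_eq_if_msgs_agree[OF \<open>3 \<le> n\<close> _ \<open>k \<le> 3 * D * m\<close> _ _ _ that])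
    show "length (lam v) = k" if "v < n" for v
      using len that by simp
    show "vertex_msg n m D j d (lam j) = vertex_msg n m D j d (lam (cyc_succ n j))"
      if "j < n" "d < D" for j d
      using vertex[of j "cyc_succ n j" d] that by (simp add: cyc_succ_less sees_cyc_succ)
    show "vertex_msg n m D (cyc_succ n j) d (lam j)
        = vertex_msg n m D (cyc_succ n j) d (lam (cyc_succ n j))" if "j < n" "d < D" for j d
      using vertex[of "cyc_succ n j" j d] that by (simp add: cyc_succ_less sees_cyc_succ)
    show "norm_msg m D (lam (cyc_succ n j)) = norm_msg m D (lam j)" if "j < n" for j
      using norm[of "cyc_succ n j" j] that by (simp add: cyc_succ_less sees_cyc_succ)
  qed
  then show "\<forall>v\<in>{..<n}. \<forall>w\<in>{..<n}. lam v = lam w"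
    using cyc_succ_invariant_const[of n lam] by (metis lessThan_iff)
qed

lemma cycle_opt_k_lower:
  assumes "3 \<le> n"
  shows "n * k \<le> 3 * opt_k {..<n} (cycle_adj n) k"
proof -
  obtain P where "solves_eq {..<n} (cycle_adj n) k P" "cost P = opt_k {..<n} (cycle_adj n) k"
    using opt_k_attained[OF solves_eq_cycle_schedule[OF assms, of k k 1]] by auto
  with assms show ?thesis
    using cycle_card_mult_le_cost[of n k P] by simp
qed

lemma cycle_opt_k_upper:
  assumes "3 \<le> n" and "1 \<le> m"
  shows "3 * m * opt_k {..<n} (cycle_adj n) k \<le> n * ((k + 3 * m) * (m + 2 * n + 1) + 6 * m\<^sup>2)"
proof -
  define D where "D = k div (3 * m) + 1"
  have "0 < 3 * m"
    using assms(2) by simp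
  then have "k \<le> 3 * D * m" "3 * m * D \<le> k + 3 * m"
    using mult_div_mod_eq[of "3 * m" k] mod_less_divisor[of "3 * m" k, OF \<open>0 < 3 * m\<close>]
    by (simp_all add: D_def algebra_simps)
  have "opt_k {..<n} (cycle_adj n) k \<le> n * (D * (m + 2 * n + 1) + 2 * m)"
    using opt_k_le_cost[OF solves_eq_cycle_schedule[OF assms(1) \<open>k \<le> 3 * D * m\<close>]]
    by (simp add: cost_cycle_schedule algebra_simps)
  then have "3 * m * opt_k {..<n} (cycle_adj n) k \<le> 3 * m * (n * (D * (m + 2 * n + 1) + 2 * m))"
    by (rule mult_left_mono) simp
  also have "\<dots> = n * ((3 * m * D) * (m + 2 * n + 1) + 6 * m\<^sup>2)"
    by (simp add: power2_eq_square algebra_simps)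
  also have "\<dots> \<le> n * ((k + 3 * m) * (m + 2 * n + 1) + 6 * m\<^sup>2)"
    using \<open>3 * m * D \<le> k + 3 * m\<close>
    by (intro mult_left_mono add_right_mono mult_right_mono) simp_all
  finally show ?thesis .
qed

lemma cycle_opt_rate_bounds:
  assumes "3 \<le> n" and "1 \<le> m" "1 \<le> k"
  shows "real n / 3 \<le> opt_rate {..<n} (cycle_adj n) k"
    and "opt_rate {..<n} (cycle_adj n) k
      \<le> real n / 3 + real n * (2 * n + 1) / 3 / real m + real n * (3 * m + 2 * n + 1) / real k"
proof -
  have "real (n * k) \<le> real (3 * opt_k {..<n} (cycle_adj n) k)"
    using cycle_opt_k_lower[OF assms(1)] by (rule of_nat_mono)
  then show "real n / 3 \<le> opt_rate {..<n} (cycle_adj n) k"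
    using assms(3) by (simp add: opt_rate_def field_simps)
  have "real (3 * m * opt_k {..<n} (cycle_adj n) k)
      \<le> real (n * ((k + 3 * m) * (m + 2 * n + 1) + 6 * m\<^sup>2))"
    using cycle_opt_k_upper[OF assms(1,2)] by (rule of_nat_mono)
  then show "opt_rate {..<n} (cycle_adj n) k
      \<le> real n / 3 + real n * (2 * n + 1) / 3 / real m + real n * (3 * m + 2 * n + 1) / real k"
    using assms(2,3) by (simp add: opt_rate_def field_simps power2_eq_square)
qed

lemma LIMSEQ_of_parametric_upper_bounds:
  fixes r b :: "nat \<Rightarrow> real"
  assumes lower: "\<And>k. 1 \<le> k \<Longrightarrow> L \<le> r k"
    and upper: "\<And>m k. 1 \<le> m \<Longrightarrow> 1 \<le> k \<Longrightarrow> r k \<le> L + a / real m + b m / real k"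
  shows "r \<longlonglongrightarrow> L"
proof (rule LIMSEQ_I)
  fix \<epsilon> :: real assume "0 < \<epsilon>"
  have "\<forall>\<^sub>F m in sequentially. a / real m < \<epsilon> / 2"
    using \<open>0 < \<epsilon>\<close> by (intro order_tendstoD(2)[OF lim_const_over_n]) simp
  then obtain M where M: "\<And>m. M \<le> m \<Longrightarrow> a / real m < \<epsilon> / 2"
    by (auto simp: eventually_sequentially)
  define m where "m = max M 1"
  have "1 \<le> m" "a / real m < \<epsilon> / 2"
    using M[of m] by (simp_all add: m_def)
  have "\<forall>\<^sub>F k in sequentially. b m / real k < \<epsilon> / 2"
    using \<open>0 < \<epsilon>\<close> by (intro order_tendstoD(2)[OF lim_const_over_n]) simp
  then obtain K where K: "\<And>k. K \<le> k \<Longrightarrow> b m / real k < \<epsilon> / 2"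
    by (auto simp: eventually_sequentially)
  have "norm (r k - L) < \<epsilon>" if "max K 1 \<le> k" for k
  proof -
    have "L \<le> r k" "r k \<le> L + a / real m + b m / real k" "b m / real k < \<epsilon> / 2"
      using lower[of k] upper[OF \<open>1 \<le> m\<close>, of k] K[of k] that by simp_all
    with \<open>a / real m < \<epsilon> / 2\<close> show ?thesis
      by (simp only: real_norm_def abs_less_iff, linarith)
  qed
  then show "\<exists>K. \<forall>k\<ge>K. norm (r k - L) < \<epsilon>"
    by blast
qed

lemma cycle_opt_rate_LIMSEQ:
  assumes "3 \<le> n"
  shows "opt_rate {..<n} (cycle_adj n) \<longlonglongrightarrow> real n / 3"
  by (rule LIMSEQ_of_parametric_upper_bounds[where a = "real n * (2 * n + 1) / 3"
        and b = "\<lambda>m. real n * (3 * m + 2 * n + 1)"])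
    (use cycle_opt_rate_bounds[OF assms] in auto)

theorem corollary4p3:
  fixes n :: nat
  assumes "n \<ge> 3"
  shows "convergent (opt_rate {..<n} (cycle_adj n))
       \<and> real n / 3 \<le> lim (opt_rate {..<n} (cycle_adj n))
       \<and> lim (opt_rate {..<n} (cycle_adj n)) \<le> (real n + 1) / 3
       \<and> (n mod 3 = 0 \<longrightarrow> lim (opt_rate {..<n} (cycle_adj n)) = real n / 3)"
proof -
  have "opt_rate {..<n} (cycle_adj n) \<longlonglongrightarrow> real n / 3"
    using assms by (rule cycle_opt_rate_LIMSEQ)
  then show ?thesis
    by (simp add: convergentI limI divide_right_mono)
qed

end
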